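(* Let $\mathbf a\in\mathbb N^{L+1}$ be an architecture with width $W$ and depth $L$, and $R>0$ a parameter bound such that \[\inf_{f\in\mathcal{NN}(\mathbf a,W,L,R)}\|f-\eta\|_{L^\infty(\rho_X)}\le\varepsilon\] for some $\varepsilon\ge0$. Then for any $\lambda\ge0$, any minimizer $\boldsymbol\theta_\lambda$ of the regularized population risk $\mathcal R_{\ell,\lambda}$ over $\mathcal P_{\mathbf a,R}$ satisfies \[\|f(\cdot;\boldsymbol\theta_\lambda)-\eta\|_{L^2(\rho_X)}\le\varepsilon+\sqrt{\tfrac\lambda2P(\mathbf a)R^p}.\]
   Context: Setting: $\mathcal X=[0,1]^d$, $\rho$ a probability distribution on $\mathcal X\times\{-1,1\}$ with $X$-marginal $\rho_X$, $(X,Y)\sim\rho$, $\eta(x)=\mathbb E[Y\mid X=x]$. Networks: $\sigma(t)=\max\{0,t\}$; architecture $\mathbf a=(a_0,\dots,a_L)$, $a_0=d$, $a_L=1$, width $W=\max_la_l$, $P(\mathbf a)=\sum_{l=1}^L(a_la_{l-1}+a_l)$; parametrization $\boldsymbol\theta=((W_l,B_l))_{l=1}^L$, $W_l\in\mathbb R^{a_l\times a_{l-1}}$, $B_l\in\mathbb R^{a_l}$; $|\boldsymbol\theta|_p^p$ is the sum of $p$-th powers of absolute entries; $\mathcal P_{\mathbf a,R}$ is the set of parametrizations with entries in $[-R,R]$. Realization $f(x;\boldsymbol\theta)=\operatorname{clip}_1(T_L\circ\sigma\circ\cdots\circ\sigma\circ T_1(x))$, $T_l(z)=W_lz+B_l$,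 $\operatorname{clip}_1(t)=\max(-1,\min(1,t))$; $\mathcal{NN}(\mathbf a,W,L,R)=\{f(\cdot;\boldsymbol\theta)|_{\mathcal X}:\boldsymbol\theta\in\mathcal P_{\mathbf a,R}\}$. Fix $0<p<\infty$; $\mathcal R_{\ell,\lambda}(\boldsymbol\theta)=\mathbb E[(f(X;\boldsymbol\theta)-Y)^2]+\frac\lambda2|\boldsymbol\theta|_p^p$. *)

theory Defs
  imports "HOL-Probability.Probability"
begin

text \<open>Inputs x in [0,1]^d are represented as functions nat => real whose
coordinates i < d lie in [0,1] and whose coordinates i >= d vanish. A parametrization is the list
[(W_1,B_1), ..., (W_L,B_L)] with W_l :: nat => nat => real (entry (i,j) relevant
for i < a_l, j < a_(l-1)) and B_l :: nat => real (entry i relevant for i < a_l).\<close>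

type_synonym layer_param = "(nat \<Rightarrow> nat \<Rightarrow> real) \<times> (nat \<Rightarrow> real)"

definition cube :: "nat \<Rightarrow> (nat \<Rightarrow> real) set" where
  "cube d = {x. (\<forall>i<d. 0 \<le> x i \<and> x i \<le> 1) \<and> (\<forall>i\<ge>d. x i = 0)}"

definition is_architecture :: "nat \<Rightarrow> nat list \<Rightarrow> bool" where
  "is_architecture d a \<longleftrightarrow> length a \<ge> 2 \<and> a ! 0 = d \<and> last a = 1"

definition depth :: "nat list \<Rightarrow> nat" where
  "depth a = length a - 1"

definition width :: "nat list \<Rightarrow> nat" where
  "width a = Max (set a)"

definition num_params :: "nat list \<Rightarrow> nat" where
  "num_params a = (\<Sum>l\<in>{1..depth a}. a ! l * a ! (l - 1) + a ! l)"

definition relu :: "real \<Rightarrow> real" where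
  "relu t = max 0 t"

definition clip1 :: "real \<Rightarrow> real" where
  "clip1 t = max (-1) (min 1 t)"

definition affine :: "nat \<Rightarrow> nat \<Rightarrow> layer_param \<Rightarrow> (nat \<Rightarrow> real) \<Rightarrow> (nat \<Rightarrow> real)" where
  "affine n m p z = (\<lambda>i. if i < n then (\<Sum>j<m. fst p i j * z j) + snd p i else 0)"

fun net_pre :: "nat list \<Rightarrow> layer_param list \<Rightarrow> (nat \<Rightarrow> real) \<Rightarrow> (nat \<Rightarrow> real)" where
  "net_pre (m # n # as) [p] z = affine n m p z"
| "net_pre (m # n # as) (p # q # ps) z =
     net_pre (n # as) (q # ps) (\<lambda>i. relu (affine n m p z i))"
| "net_pre _ _ z = z"

definition realization :: "nat list \<Rightarrow> layer_param list \<Rightarrow> (nat \<Rightarrow> real) \<Rightarrow> real" where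
  "realization a \<theta> x = clip1 (net_pre a \<theta> x 0)"

definition param_set :: "nat list \<Rightarrow> real \<Rightarrow> layer_param list set" where
  "param_set a R = {\<theta>. length \<theta> = depth a \<and>
     (\<forall>l<depth a. (\<forall>i<a ! (l+1). \<forall>j<a ! l. \<bar>fst (\<theta> ! l) i j\<bar> \<le> R) \<and>
                  (\<forall>i<a ! (l+1). \<bar>snd (\<theta> ! l) i\<bar> \<le> R))}"

definition param_pnorm_pow :: "real \<Rightarrow> nat list \<Rightarrow> layer_param list \<Rightarrow> real" where
  "param_pnorm_pow p a \<theta> = (\<Sum>l<depth a.
       (\<Sum>i<a ! (l+1). \<Sum>j<a ! l. \<bar>fst (\<theta> ! l) i j\<bar> powr p)
     + (\<Sum>i<a ! (l+1). \<bar>snd (\<theta> ! l) i\<bar> powr p))"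

text \<open>NN(a, W, L, R) (W = width a and L = depth a are determined by a).\<close>
definition NN :: "nat list \<Rightarrow> nat \<Rightarrow> nat \<Rightarrow> real \<Rightarrow> ((nat \<Rightarrow> real) \<Rightarrow> real) set" where
  "NN a W L R = (if W = width a \<and> L = depth a
      then realization a ` param_set a R else {})"

definition marginal :: "((nat \<Rightarrow> real) \<times> real) measure \<Rightarrow> (nat \<Rightarrow> real) measure" where
  "marginal \<rho> = distr \<rho> borel fst"

definition is_regression_fun ::
  "((nat \<Rightarrow> real) \<times> real) measure \<Rightarrow> ((nat \<Rightarrow> real) \<Rightarrow> real) \<Rightarrow> bool" where
  "is_regression_fun \<rho> \<eta> \<longleftrightarrow> \<eta> \<in> borel_measurable borel \<and>
     (\<forall>A \<in> sets borel. (\<integral>z. indicator A (fst z) * snd z \<partial>\<rho>)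
                       = (\<integral>x. indicator A x * \<eta> x \<partial>marginal \<rho>))"

definition Linf_dist :: "(nat \<Rightarrow> real) measure \<Rightarrow> ((nat \<Rightarrow> real) \<Rightarrow> real) \<Rightarrow> ((nat \<Rightarrow> real) \<Rightarrow> real) \<Rightarrow> ereal" where
  "Linf_dist \<mu> f g = esssup \<mu> (\<lambda>x. ereal \<bar>f x - g x\<bar>)"

definition L2_dist :: "(nat \<Rightarrow> real) measure \<Rightarrow> ((nat \<Rightarrow> real) \<Rightarrow> real) \<Rightarrow> ((nat \<Rightarrow> real) \<Rightarrow> real) \<Rightarrow> real" where
  "L2_dist \<mu> f g = sqrt (\<integral>x. (f x - g x)\<^sup>2 \<partial>\<mu>)"

definition reg_risk :: "((nat \<Rightarrow> real) \<times> real) measure \<Rightarrow> real \<Rightarrow> real \<Rightarrow> nat list \<Rightarrow> layer_param list \<Rightarrow> real" where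
  "reg_risk \<rho> p lam a \<theta> = (\<integral>z. (realization a \<theta> (fst z) - snd z)\<^sup>2 \<partial>\<rho>)
      + lam / 2 * param_pnorm_pow p a \<theta>"

end

theory Submission
  imports Defs
begin

(* Because \<eta> is the regression function, E[h(X) Y] = E[h(X) \<eta>(X)] for every integrable h
   (extend the defining identity from indicators by induction over integrable functions), so the
   squared loss splits as E[(f(X) - Y)^2] = ||f - \<eta>||^2 + (E[Y^2] - E[\<eta>(X)^2]), the last term
   not depending on f. Comparing the minimizer with a network \<theta> that is (\<epsilon> + e)-close to \<eta> in
   L^\<infinity>, this term cancels, the penalty of the minimizer is nonnegative and that of \<theta> is at most
   \<lambda>/2 P(a) R^p; hence ||f_\<lambda> - \<eta>||^2 <= (\<epsilon> + e)^2 + \<lambda>/2 P(a) R^p for every e > 0, and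
   sqrt (x + y) <= sqrt x + sqrt y finishes the proof. *)

lemma fst_snd_measurable_sets_borel:
  fixes \<rho> :: "('a::topological_space \<times> 'b::topological_space) measure"
  assumes "sets \<rho> = sets borel"
  shows "fst \<in> borel_measurable \<rho>" "snd \<in> borel_measurable \<rho>"
  unfolding measurable_cong_sets[OF assms refl]
  by (auto intro!: borel_measurable_continuous_onI continuous_on_fst continuous_on_snd)

lemma integrable_mult_AE_bounded:
  fixes f g :: "'a \<Rightarrow> real"
  assumes "integrable M f" "g \<in> borel_measurable M" "AE x in M. \<bar>g x\<bar> \<le> C"
  shows "integrable M (\<lambda>x. f x * g x)"
proof (rule Bochner_Integration.integrable_bound)
  show "integrable M (\<lambda>x. C * f x)" using assms(1) by simp
  show "AE x in M. norm (f x * g x) \<le> norm (C * f x)"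
    using assms(3) by eventually_elim (simp add: abs_mult, metis abs_ge_zero mult.commute mult_left_mono)
qed (use assms(1-3) in auto)

lemma tendsto_integral_mult_AE_bounded:
  fixes s :: "nat \<Rightarrow> 'a \<Rightarrow> real"
  assumes "\<And>i. s i \<in> borel_measurable M" "g \<in> borel_measurable M" "integrable M w"
    and "\<And>x. (\<lambda>i. s i x) \<longlonglongrightarrow> f x" "\<And>i x. \<bar>s i x\<bar> \<le> w x"
    and "AE x in M. \<bar>g x\<bar> \<le> C"
  shows "(\<lambda>i. \<integral>x. s i x * g x \<partial>M) \<longlonglongrightarrow> (\<integral>x. f x * g x \<partial>M)"
proof (rule integral_dominated_convergence[where w="\<lambda>x. w x * C"])
  have "f \<in> borel_measurable M"
    by (rule borel_measurable_LIMSEQ_real[where u=s]) (use assms in auto)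
  then show "(\<lambda>x. f x * g x) \<in> borel_measurable M"
    using assms(2) by simp
  show "AE x in M. norm (s i x * g x) \<le> w x * C" for i
    using assms(6)
  proof eventually_elim
    case (elim x)
    have "0 \<le> w x" using assms(5)[of i x] by linarith
    then show ?case using mult_mono[OF assms(5) elim] by (simp add: abs_mult)
  qed
  show "AE x in M. (\<lambda>i. s i x * g x) \<longlonglongrightarrow> f x * g x"
    using assms(4) by (simp add: tendsto_mult_right)
qed (use assms(1-3) in auto)

lemma integral_power2_diff:
  fixes f g :: "'a \<Rightarrow> real"
  assumes "integrable M (\<lambda>x. (f x)\<^sup>2)" "integrable M (\<lambda>x. f x * g x)" "integrable M (\<lambda>x. (g x)\<^sup>2)"
  shows "(\<integral>x. (f x - g x)\<^sup>2 \<partial>M) = (\<integral>x. (f x)\<^sup>2 \<partial>M) - 2 * (\<integral>x. f x * g x \<partial>M) + (\<integral>x. (g x)\<^sup>2 \<partial>M)"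
proof -
  have "(\<integral>x. (f x - g x)\<^sup>2 \<partial>M) = (\<integral>x. (f x)\<^sup>2 - 2 * (f x * g x) + (g x)\<^sup>2 \<partial>M)"
    by (rule Bochner_Integration.integral_cong) (auto simp: power2_diff)
  also have "\<dots> = (\<integral>x. (f x)\<^sup>2 \<partial>M) - 2 * (\<integral>x. f x * g x \<partial>M) + (\<integral>x. (g x)\<^sup>2 \<partial>M)"
    using assms by simp
  finally show ?thesis .
qed

lemma (in finite_measure) integrable_power2_AE_bounded:
  fixes f :: "'a \<Rightarrow> real"
  assumes "f \<in> borel_measurable M" "AE x in M. \<bar>f x\<bar> \<le> B"
  shows "integrable M (\<lambda>x. (f x)\<^sup>2)"
proof (rule integrable_const_bound[where B="B\<^sup>2"])
  show "AE x in M. norm ((f x)\<^sup>2) \<le> B\<^sup>2"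
    using assms(2) by eventually_elim (simp, metis abs_ge_zero power2_abs power_mono)
qed (use assms(1) in simp)

locale bounded_regression = prob_space \<rho>
  for \<rho> :: "('a::topological_space \<times> real) measure" +
  fixes \<eta> :: "'a \<Rightarrow> real" and C :: real
  assumes sets_eq_borel: "sets \<rho> = sets borel"
    and response_bounded: "AE z in \<rho>. \<bar>snd z\<bar> \<le> 1"
    and regression_measurable[measurable]: "\<eta> \<in> borel_measurable borel"
    and regression_bounded: "AE x in distr \<rho> borel fst. \<bar>\<eta> x\<bar> \<le> C"
    and integral_indicator_mult_snd: "\<And>A. A \<in> sets borel \<Longrightarrow>
      (\<integral>z. indicator A (fst z) * snd z \<partial>\<rho>) = (\<integral>x. indicator A x * \<eta> x \<partial>distr \<rho> borel fst)"
begin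

abbreviation law_X :: "'a measure" where
  "law_X \<equiv> distr \<rho> borel fst"

lemma fst_measurable[measurable]: "fst \<in> borel_measurable \<rho>"
  and snd_measurable[measurable]: "snd \<in> borel_measurable \<rho>"
  using fst_snd_measurable_sets_borel[OF sets_eq_borel] by auto

lemma regression_measurable_law_X[measurable]: "\<eta> \<in> borel_measurable law_X"
  by simp

lemma prob_space_law_X: "prob_space law_X"
  by (rule prob_space_distr) simp

lemma integrable_fst_mult_snd:
  assumes "integrable law_X h"
  shows "integrable \<rho> (\<lambda>z. h (fst z) * snd z)"
proof (rule integrable_mult_AE_bounded[OF _ snd_measurable response_bounded])
  have "h \<in> borel_measurable borel"
    using borel_measurable_integrable[OF assms] by simp
  then show "integrable \<rho> (\<lambda>z. h (fst z))"
    using assms integrable_distr_eq[OF fst_measurable] by blast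
qed

lemma integrable_mult_regression:
  "integrable law_X h \<Longrightarrow> integrable law_X (\<lambda>x. h x * \<eta> x)"
  by (rule integrable_mult_AE_bounded[OF _ regression_measurable_law_X regression_bounded])

lemma integral_fst_mult_snd:
  assumes "integrable law_X h"
  shows "(\<integral>z. h (fst z) * snd z \<partial>\<rho>) = (\<integral>x. h x * \<eta> x \<partial>law_X)"
  using assms
proof (induction rule: integrable_induct)
  case (base A c)
  then show ?case
    using integral_indicator_mult_snd[of A] by (simp add: mult.commute mult.left_commute)
next
  case (add f g)
  then show ?case
    by (simp add: distrib_right integrable_fst_mult_snd integrable_mult_regression)
next
  case (lim f s)
  have f_measurable[measurable]: "f \<in> borel_measurable borel"
    using borel_measurable_integrable[OF lim.hyps(4)] by simp
  have s_measurable[measurable]: "s i \<in> borel_measurable borel" for i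
    using borel_measurable_integrable[OF lim.hyps(1)] by simp
  have "(\<lambda>i. \<integral>z. s i (fst z) * snd z \<partial>\<rho>) \<longlonglongrightarrow> (\<integral>z. f (fst z) * snd z \<partial>\<rho>)"
  proof (rule tendsto_integral_mult_AE_bounded[OF _ _ _ _ _ response_bounded])
    show "integrable \<rho> (\<lambda>z. 2 * \<bar>f (fst z)\<bar>)"
      using lim.hyps(4) integrable_distr_eq[OF fst_measurable f_measurable] by simp
  qed (use lim.hyps(2,3) in auto)
  moreover have "(\<lambda>i. \<integral>x. s i x * \<eta> x \<partial>law_X) \<longlonglongrightarrow> (\<integral>x. f x * \<eta> x \<partial>law_X)"
    by (rule tendsto_integral_mult_AE_bounded[OF _ _ _ _ _ regression_bounded, where w="\<lambda>x. 2 * \<bar>f x\<bar>"])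
      (use lim.hyps in auto)
  ultimately show ?case
    using lim.IH LIMSEQ_unique by simp
qed

lemma integrable_snd_power2: "integrable \<rho> (\<lambda>z. (snd z)\<^sup>2)"
  using integrable_power2_AE_bounded[OF snd_measurable response_bounded] .

lemma integrable_regression_power2: "integrable law_X (\<lambda>x. (\<eta> x)\<^sup>2)"
proof -
  interpret X: prob_space law_X by (rule prob_space_law_X)
  show ?thesis
    using X.integrable_power2_AE_bounded[OF regression_measurable_law_X regression_bounded] .
qed

lemma integral_squared_loss:
  assumes f_measurable[measurable]: "f \<in> borel_measurable borel" and f_bounded: "\<And>x. \<bar>f x\<bar> \<le> 1"
  shows "(\<integral>z. (f (fst z) - snd z)\<^sup>2 \<partial>\<rho>)
    = (\<integral>x. (f x - \<eta> x)\<^sup>2 \<partial>law_X) + ((\<integral>z. (snd z)\<^sup>2 \<partial>\<rho>) - (\<integral>x. (\<eta> x)\<^sup>2 \<partial>law_X))"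
proof -
  interpret X: prob_space law_X by (rule prob_space_law_X)
  have integrable_f: "integrable law_X f"
    using f_bounded by (intro X.integrable_const_bound[where B=1]) auto
  have integrable_f2: "integrable law_X (\<lambda>x. (f x)\<^sup>2)"
    using f_bounded by (intro X.integrable_power2_AE_bounded[where B=1]) auto
  have integrable_f2_fst: "integrable \<rho> (\<lambda>z. (f (fst z))\<^sup>2)"
    using f_bounded by (intro integrable_power2_AE_bounded[where B=1]) auto
  have "(\<integral>z. (f (fst z))\<^sup>2 \<partial>\<rho>) = (\<integral>x. (f x)\<^sup>2 \<partial>law_X)"
    by (rule integral_distr[symmetric]) auto
  then show ?thesis
    using integral_fst_mult_snd[OF integrable_f]
    by (simp add: integral_power2_diff integrable_f2_fst integrable_fst_mult_snd[OF integrable_f]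
        integrable_snd_power2 integrable_f2 integrable_mult_regression[OF integrable_f]
        integrable_regression_power2)
qed

end


lemma net_pre_borel_measurable:
  assumes "\<And>i. (\<lambda>x. z x i) \<in> borel_measurable M"
  shows "(\<lambda>x. net_pre a \<theta> (z x) i) \<in> borel_measurable M"
  using assms
  \<comment> \<open>the vector argument of the induction rule plays no role, hence the dummy \<open>z undefined\<close>\<close>
proof (induction a \<theta> "z undefined" arbitrary: z i rule: net_pre.induct)
  case (2 m n as p q ps)
  then show ?case by (simp add: affine_def relu_def)
qed (auto simp: affine_def)

lemma realization_borel_measurable: "realization a \<theta> \<in> borel_measurable borel"
proof -
  have "(\<lambda>x::nat \<Rightarrow> real. x i) \<in> borel_measurable borel" for i
    by (rule borel_measurable_continuous_onI) simp
  then have "(\<lambda>x. net_pre a \<theta> x 0) \<in> borel_measurable borel"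
    using net_pre_borel_measurable[where z="\<lambda>x. x"] by simp
  then show ?thesis unfolding realization_def clip1_def by simp
qed

lemma abs_realization_le_1: "\<bar>realization a \<theta> x\<bar> \<le> 1"
  by (simp add: realization_def clip1_def)

lemma param_pnorm_pow_nonneg: "0 \<le> param_pnorm_pow p a \<theta>"
  unfolding param_pnorm_pow_def by (intro sum_nonneg add_nonneg_nonneg) auto

lemma param_pnorm_pow_le:
  assumes "\<theta> \<in> param_set a R" "0 \<le> p"
  shows "param_pnorm_pow p a \<theta> \<le> real (num_params a) * R powr p"
proof -
  have entry_le: "\<bar>t\<bar> \<le> R \<Longrightarrow> \<bar>t\<bar> powr p \<le> R powr p" for t
    using assms(2) by (simp add: powr_mono2)
  have "param_pnorm_pow p a \<theta> \<le> (\<Sum>l<depth a. real (a ! (l+1) * a ! l + a ! (l+1)) * R powr p)"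
    unfolding param_pnorm_pow_def
  proof (rule sum_mono)
    fix l assume l: "l \<in> {..<depth a}"
    have "(\<Sum>i<a ! (l+1). \<Sum>j<a ! l. \<bar>fst (\<theta> ! l) i j\<bar> powr p) \<le> (\<Sum>i<a ! (l+1). \<Sum>j<a ! l. R powr p)"
      using assms(1) l by (intro sum_mono entry_le) (auto simp: param_set_def)
    moreover have "(\<Sum>i<a ! (l+1). \<bar>snd (\<theta> ! l) i\<bar> powr p) \<le> (\<Sum>i<a ! (l+1). R powr p)"
      using assms(1) l by (intro sum_mono entry_le) (auto simp: param_set_def)
    ultimately show "(\<Sum>i<a ! (l+1). \<Sum>j<a ! l. \<bar>fst (\<theta> ! l) i j\<bar> powr p)
        + (\<Sum>i<a ! (l+1). \<bar>snd (\<theta> ! l) i\<bar> powr p) \<le> real (a ! (l+1) * a ! l + a ! (l+1)) * R powr p"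
      by (simp add: algebra_simps)
  qed
  also have "\<dots> = real (num_params a) * R powr p"
    by (simp add: num_params_def sum.atLeast1_atMost_eq sum_distrib_right)
  finally show ?thesis .
qed

lemma AE_abs_diff_le_if_Linf_dist_less:
  assumes "Linf_dist M f g < ereal t"
  shows "AE x in M. \<bar>f x - g x\<bar> \<le> t"
  using esssup_AE[of "\<lambda>x. ereal \<bar>f x - g x\<bar>" M]
proof eventually_elim
  case (elim x)
  then have "ereal \<bar>f x - g x\<bar> < ereal t"
    using assms unfolding Linf_dist_def by (rule le_less_trans)
  then show ?case by simp
qed

lemma AE_abs_le_if_Linf_dist_less:
  assumes "Linf_dist M f g < ereal t" "\<And>x. \<bar>f x\<bar> \<le> 1"
  shows "AE x in M. \<bar>g x\<bar> \<le> t + 1"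
  using AE_abs_diff_le_if_Linf_dist_less[OF assms(1)]
proof eventually_elim
  case (elim x)
  then show ?case using assms(2)[of x] by linarith
qed

lemma (in prob_space) integral_power2_le_if_AE_abs_le:
  fixes f :: "'a \<Rightarrow> real"
  assumes "f \<in> borel_measurable M" "AE x in M. \<bar>f x\<bar> \<le> t"
  shows "(\<integral>x. (f x)\<^sup>2 \<partial>M) \<le> t\<^sup>2"
proof -
  have "(\<integral>x. (f x)\<^sup>2 \<partial>M) \<le> (\<integral>x. t\<^sup>2 \<partial>M)"
  proof (rule integral_mono_AE)
    show "integrable M (\<lambda>x. (f x)\<^sup>2)"
      using assms by (rule integrable_power2_AE_bounded)
    show "AE x in M. (f x)\<^sup>2 \<le> t\<^sup>2"
      using assms(2) by eventually_elim (metis abs_ge_zero power2_abs power_mono)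
  qed simp
  then show ?thesis by (simp add: prob_space)
qed

lemma NN_Linf_approximant:
  assumes "(INF f \<in> NN a (width a) (depth a) R. Linf_dist \<mu> f \<eta>) \<le> ereal \<epsilon>" "0 < e"
  obtains \<theta> where "\<theta> \<in> param_set a R" "Linf_dist \<mu> (realization a \<theta>) \<eta> < ereal (\<epsilon> + e)"
proof -
  have "(INF \<theta> \<in> param_set a R. Linf_dist \<mu> (realization a \<theta>) \<eta>) < ereal (\<epsilon> + e)"
    using assms by (simp add: NN_def image_image le_less_trans)
  then show ?thesis using that by (auto simp: INF_less_iff)
qed

lemma sqrt_le_add_sqrt_if_le_power2_add:
  fixes G \<epsilon> Q :: real
  assumes "0 \<le> \<epsilon>" "0 \<le> Q" "\<And>e. 0 < e \<Longrightarrow> G \<le> (\<epsilon> + e)\<^sup>2 + Q"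
  shows "sqrt G \<le> \<epsilon> + sqrt Q"
proof (rule field_le_epsilon)
  fix e :: real assume "0 < e"
  then have "sqrt G \<le> sqrt ((\<epsilon> + e)\<^sup>2 + Q)"
    using assms(3) by simp
  also have "\<dots> \<le> sqrt ((\<epsilon> + e)\<^sup>2) + sqrt Q"
    using assms(2) by (intro sqrt_add_le_add_sqrt) auto
  also have "\<dots> = \<epsilon> + sqrt Q + e"
    using assms(1) \<open>0 < e\<close> by simp
  finally show "sqrt G \<le> \<epsilon> + sqrt Q + e" .
qed

lemma bounded_regression_if_is_regression_fun:
  assumes "prob_space \<rho>" "sets \<rho> = sets borel" "AE z in \<rho>. snd z \<in> {-1, 1}"
    and "is_regression_fun \<rho> \<eta>" "AE x in marginal \<rho>. \<bar>\<eta> x\<bar> \<le> C"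
  shows "bounded_regression \<rho> \<eta> C"
proof (intro bounded_regression.intro[OF assms(1)] bounded_regression_axioms.intro)
  show "AE z in \<rho>. \<bar>snd z\<bar> \<le> 1"
    using assms(3) by eventually_elim auto
  show "AE x in distr \<rho> borel fst. \<bar>\<eta> x\<bar> \<le> C"
    using assms(5) unfolding marginal_def .
qed (use assms(2,4) in \<open>simp_all add: is_regression_fun_def marginal_def\<close>)

lemma regression_error_le_if_minimizer:
  assumes "bounded_regression \<rho> \<eta> C" "0 \<le> p" "0 \<le> lam" "\<theta> \<in> param_set a R"
    and "reg_risk \<rho> p lam a \<theta>\<^sub>0 \<le> reg_risk \<rho> p lam a \<theta>"
  shows "(\<integral>x. (realization a \<theta>\<^sub>0 x - \<eta> x)\<^sup>2 \<partial>marginal \<rho>)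
    \<le> (\<integral>x. (realization a \<theta> x - \<eta> x)\<^sup>2 \<partial>marginal \<rho>) + lam / 2 * real (num_params a) * R powr p"
proof -
  interpret bounded_regression \<rho> \<eta> C by fact
  have "lam / 2 * param_pnorm_pow p a \<theta> \<le> lam / 2 * real (num_params a) * R powr p"
    using param_pnorm_pow_le[OF assms(4,2)] assms(3) by (simp add: mult.assoc mult_left_mono)
  moreover have "0 \<le> lam / 2 * param_pnorm_pow p a \<theta>\<^sub>0"
    using param_pnorm_pow_nonneg assms(3) by simp
  ultimately show ?thesis
    using assms(5) unfolding reg_risk_def marginal_def
    by (simp add: integral_squared_loss[OF realization_borel_measurable abs_realization_le_1])
qed

theorem lemma9:
  fixes \<rho> :: "((nat \<Rightarrow> real) \<times> real) measure"
    and \<eta> :: "(nat \<Rightarrow> real) \<Rightarrow> real"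
    and d :: nat and a :: "nat list" and R p \<epsilon> lam :: real
    and \<theta>_lam :: "layer_param list"
  assumes prob: "prob_space \<rho>"
    and sets_rho: "sets \<rho> = sets borel"
    and support: "AE z in \<rho>. fst z \<in> cube d \<and> snd z \<in> {-1, 1}"
    and eta: "is_regression_fun \<rho> \<eta>"
    and p_pos: "0 < p"
    and arch: "is_architecture d a"
    and R_pos: "R > 0"
    and eps: "\<epsilon> \<ge> 0"
    and approx: "(INF f \<in> NN a (width a) (depth a) R. Linf_dist (marginal \<rho>) f \<eta>) \<le> ereal \<epsilon>"
    and lam: "lam \<ge> 0"
    and min_mem: "\<theta>_lam \<in> param_set a R"
    and minimizer: "\<forall>\<theta> \<in> param_set a R. reg_risk \<rho> p lam a \<theta>_lam \<le> reg_risk \<rho> p lam a \<theta>"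
  shows "L2_dist (marginal \<rho>) (realization a \<theta>_lam) \<eta>
           \<le> \<epsilon> + sqrt (lam / 2 * real (num_params a) * R powr p)"
proof -
  define Q where "Q = lam / 2 * real (num_params a) * R powr p"
  obtain \<theta>\<^sub>1 where "Linf_dist (marginal \<rho>) (realization a \<theta>\<^sub>1) \<eta> < ereal (\<epsilon> + 1)"
    using NN_Linf_approximant[OF approx, of 1] by auto
  then have "AE x in marginal \<rho>. \<bar>\<eta> x\<bar> \<le> \<epsilon> + 1 + 1"
    using abs_realization_le_1 by (rule AE_abs_le_if_Linf_dist_less)
  then have regression: "bounded_regression \<rho> \<eta> (\<epsilon> + 1 + 1)"
    using prob sets_rho support eta by (intro bounded_regression_if_is_regression_fun) auto
  interpret X: prob_space "marginal \<rho>"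
    unfolding marginal_def by (rule bounded_regression.prob_space_law_X[OF regression])
  have "(\<integral>x. (realization a \<theta>_lam x - \<eta> x)\<^sup>2 \<partial>marginal \<rho>) \<le> (\<epsilon> + e)\<^sup>2 + Q" if e: "0 < e" for e
  proof -
    obtain \<theta> where \<theta>: "\<theta> \<in> param_set a R" "Linf_dist (marginal \<rho>) (realization a \<theta>) \<eta> < ereal (\<epsilon> + e)"
      using NN_Linf_approximant[OF approx e] .
    have "(\<integral>x. (realization a \<theta>_lam x - \<eta> x)\<^sup>2 \<partial>marginal \<rho>)
        \<le> (\<integral>x. (realization a \<theta> x - \<eta> x)\<^sup>2 \<partial>marginal \<rho>) + Q"
      unfolding Q_def using regression p_pos lam \<theta>(1) minimizer
      by (intro regression_error_le_if_minimizer) auto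
    also have "(\<integral>x. (realization a \<theta> x - \<eta> x)\<^sup>2 \<partial>marginal \<rho>) \<le> (\<epsilon> + e)\<^sup>2"
      using AE_abs_diff_le_if_Linf_dist_less[OF \<theta>(2)] bounded_regression.regression_measurable[OF regression]
      by (intro X.integral_power2_le_if_AE_abs_le) (auto simp: marginal_def intro!: borel_measurable_diff realization_borel_measurable)
    finally show ?thesis by simp
  qed
  then show ?thesis
    unfolding L2_dist_def Q_def using eps lam by (intro sqrt_le_add_sqrt_if_le_power2_add) auto
qed

end
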